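(* Let $V\subset\mathbb{R}^d$ be the closure of a bounded domain, let $\rho_t=h(t)\delta_{\gamma(t)}\in\mathcal{H}_V$ and let $b\in C^1(V)$. Then $t\mapsto h(t)b(\gamma(t))$ (set equal to $0$ where $h(t)=0$) belongs to ${\rm AC}^2[0,1]$, and for a.e. $t\in(0,1)$ $$\big(h(t)b(\gamma(t))\big)'=\dot h(t)\,b(\gamma(t))+h(t)\nabla b(\gamma(t))\cdot\dot\gamma(t),$$ where the right-hand side is understood as $0$ at times with $h(t)=0$.
   Context: ${\rm AC}^2$ denotes absolutely continuous functions with a.e. derivative in $L^2$. $\mathscr{S}_V$ is the set of narrowly continuous curves $[0,1]\to\mathcal{M}^+(V)$ with values in $\{h\delta_\gamma:h\ge0,\gamma\in V\}$, written $\rho_t=h(t)\delta_{\gamma(t)}$ ($\gamma$ determined only where $h>0$). $\mathcal{H}_V:=\{\rho\in\mathscr{S}_V: h,\sqrt h\in{\rm AC}^2[0,1],\ \sqrt h\,\gamma\in{\rm AC}^2([0,1];\mathbb{R}^d)\}$, with $\sqrt h\gamma:=0$ on $\{h=0\}$. *)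

theory Defs
  imports "HOL-Analysis.Analysis"
begin

definition AC_on :: "real \<Rightarrow> real \<Rightarrow> (real \<Rightarrow> 'b::real_normed_vector) \<Rightarrow> bool" where
  "AC_on a b f \<longleftrightarrow>
     (\<forall>\<epsilon>>0. \<exists>\<delta>>0. \<forall>(n::nat) (l::nat \<Rightarrow> real) (r::nat \<Rightarrow> real).
        (\<forall>k<n. a \<le> l k \<and> l k \<le> r k \<and> r k \<le> b) \<and>
        disjoint_family_on (\<lambda>k. {l k<..<r k}) {..<n} \<and>
        (\<Sum>k<n. r k - l k) < \<delta>
        \<longrightarrow> (\<Sum>k<n. norm (f (r k) - f (l k))) < \<epsilon>)"

definition AC2 :: "(real \<Rightarrow> 'b::euclidean_space) \<Rightarrow> bool" where
  "AC2 f \<longleftrightarrow> AC_on 0 1 f \<and>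
     (\<exists>g::real \<Rightarrow> 'b. g \<in> borel_measurable lborel \<and>
        integrable (restrict_space lborel {0..1}) (\<lambda>t. (norm (g t))\<^sup>2) \<and>
        (AE t in lborel. t \<in> {0<..<1} \<longrightarrow> (f has_vector_derivative g t) (at t)))"

text \<open>S_V: the curve t \<mapsto> h(t) \<delta>_{\<gamma>(t)} takes values in nonnegative measures on V
  (h t \<ge> 0, \<gamma> t \<in> V where h t > 0) and is narrowly continuous on [0,1], i.e. continuous
  when tested against every bounded continuous function on V.\<close>
definition in_SV :: "'a::euclidean_space set \<Rightarrow> (real \<Rightarrow> real) \<Rightarrow> (real \<Rightarrow> 'a) \<Rightarrow> bool" where
  "in_SV V h \<gamma> \<longleftrightarrow>
     (\<forall>t\<in>{0..1}. 0 \<le> h t \<and> (0 < h t \<longrightarrow> \<gamma> t \<in> V)) \<and>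
     (\<forall>\<phi>::'a \<Rightarrow> real. continuous_on V \<phi> \<and> bounded (\<phi> ` V) \<longrightarrow>
        continuous_on {0..1} (\<lambda>t. h t * \<phi> (\<gamma> t)))"

definition in_HV :: "'a::euclidean_space set \<Rightarrow> (real \<Rightarrow> real) \<Rightarrow> (real \<Rightarrow> 'a) \<Rightarrow> bool" where
  "in_HV V h \<gamma> \<longleftrightarrow> in_SV V h \<gamma> \<and> AC2 h \<and> AC2 (\<lambda>t. sqrt (h t)) \<and>
     AC2 (\<lambda>t. if h t = 0 then 0 else sqrt (h t) *\<^sub>R \<gamma> t)"

end

theory Submission
  imports Defs
begin

text \<open>Write \<open>w = \<surd>h \<gamma>\<close>. Since \<open>h b(\<gamma>) = (\<surd>h)\<^sup>2 b(\<gamma>)\<close>, the elementary estimate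
  \<open>\<bar>a\<^sup>2 b(p) - c\<^sup>2 b(q)\<bar> \<le> B \<bar>a\<^sup>2 - c\<^sup>2\<bar> + L M R \<bar>a - c\<bar> + L M \<parallel>a p - c q\<parallel>\<close>
  (for \<open>b\<close> bounded by \<open>B\<close> and \<open>L\<close>-Lipschitz on the compact set \<open>V\<close> of radius \<open>R\<close>, and \<open>0 \<le> c \<le> M\<close>)
  dominates the increments of \<open>h b(\<gamma>)\<close> by those of \<open>(h, \<surd>h, w)\<close>, so \<open>h b(\<gamma>)\<close> is absolutely
  continuous. Where \<open>h > 0\<close>, \<open>\<gamma> = w / \<surd>h\<close> is differentiable with
  \<open>\<gamma>' = (w' - (\<surd>h)' \<gamma>) / \<surd>h\<close> and the product and chain rules apply; where \<open>h = 0\<close>, \<open>h\<close> has a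
  minimum, so \<open>h' = 0\<close>, and \<open>\<bar>h b(\<gamma>)\<bar> \<le> B h\<close> forces the derivative \<open>0\<close>. The resulting derivative
  \<open>h' b(\<gamma>) + \<surd>h \<nabla>b(\<gamma>) \<cdot> (w' - (\<surd>h)' \<gamma>)\<close> is a combination of \<open>h'\<close>, \<open>(\<surd>h)'\<close>, \<open>w'\<close> with
  bounded measurable coefficients, hence square integrable.\<close>

definition nonoverlapping_intervals :: "real \<Rightarrow> real \<Rightarrow> nat \<Rightarrow> (nat \<Rightarrow> real) \<Rightarrow> (nat \<Rightarrow> real) \<Rightarrow> bool"
  where "nonoverlapping_intervals a b n l r \<longleftrightarrow>
    (\<forall>k<n. a \<le> l k \<and> l k \<le> r k \<and> r k \<le> b) \<and> disjoint_family_on (\<lambda>k. {l k<..<r k}) {..<n}"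

lemma AC_on_iff:
  "AC_on a b f \<longleftrightarrow> (\<forall>\<epsilon>>0. \<exists>\<delta>>0. \<forall>n l r. nonoverlapping_intervals a b n l r \<and> (\<Sum>k<n. r k - l k) < \<delta>
     \<longrightarrow> (\<Sum>k<n. norm (f (r k) - f (l k))) < \<epsilon>)"
  by (simp add: AC_on_def nonoverlapping_intervals_def conj_assoc)

lemma AC_onE:
  assumes "AC_on a b f" "0 < \<epsilon>"
  obtains \<delta> where "0 < \<delta>" "\<And>n l r. nonoverlapping_intervals a b n l r \<Longrightarrow> (\<Sum>k<n. r k - l k) < \<delta> \<Longrightarrow>
      (\<Sum>k<n. norm (f (r k) - f (l k))) < \<epsilon>"
proof -
  from assms obtain \<delta> where "0 < \<delta>" and "\<forall>n l r. nonoverlapping_intervals a b n l r \<and> (\<Sum>k<n. r k - l k) < \<delta>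
      \<longrightarrow> (\<Sum>k<n. norm (f (r k) - f (l k))) < \<epsilon>"
    unfolding AC_on_iff by auto
  then show thesis by (intro that) auto
qed

lemma AC_on_imp_continuous_on:
  assumes "AC_on a b f"
  shows "continuous_on {a..b} f"
  unfolding continuous_on_iff
proof (intro ballI allI impI)
  fix x \<epsilon> :: real
  assume x: "x \<in> {a..b}" and "0 < \<epsilon>"
  obtain \<delta> where "0 < \<delta>" and \<delta>: "\<And>n l r. nonoverlapping_intervals a b n l r \<Longrightarrow>
      (\<Sum>k<n. r k - l k) < \<delta> \<Longrightarrow> (\<Sum>k<n. norm (f (r k) - f (l k))) < \<epsilon>"
    by (rule AC_onE[OF assms \<open>0 < \<epsilon>\<close>]) (rule that; assumption)
  have "dist (f y) (f x) < \<epsilon>" if "y \<in> {a..b}" "dist y x < \<delta>" for y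
  proof -
    have "norm (f (max x y) - f (min x y)) < \<epsilon>"
      using \<delta>[of 1 "\<lambda>_. min x y" "\<lambda>_. max x y"] x that
      by (auto simp: dist_real_def nonoverlapping_intervals_def disjoint_family_on_def)
    then show ?thesis
      by (cases "x \<le> y") (auto simp: dist_norm norm_minus_commute max_def)
  qed
  with \<open>0 < \<delta>\<close> show "\<exists>\<delta>>0. \<forall>y\<in>{a..b}. dist y x < \<delta> \<longrightarrow> dist (f y) (f x) < \<epsilon>"
    by blast
qed

lemma AC_on_Pair:
  assumes "AC_on a b f" "AC_on a b g"
  shows "AC_on a b (\<lambda>t. (f t, g t))"
  unfolding AC_on_iff
proof (intro allI impI)
  fix \<epsilon> :: real
  assume "0 < \<epsilon>"
  then have "0 < \<epsilon> / 2" by simp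
  obtain \<delta>f where "0 < \<delta>f" and \<delta>f: "\<And>n l r. nonoverlapping_intervals a b n l r \<Longrightarrow>
      (\<Sum>k<n. r k - l k) < \<delta>f \<Longrightarrow> (\<Sum>k<n. norm (f (r k) - f (l k))) < \<epsilon> / 2"
    by (rule AC_onE[OF assms(1) \<open>0 < \<epsilon> / 2\<close>]) (rule that; assumption)
  obtain \<delta>g where "0 < \<delta>g" and \<delta>g: "\<And>n l r. nonoverlapping_intervals a b n l r \<Longrightarrow>
      (\<Sum>k<n. r k - l k) < \<delta>g \<Longrightarrow> (\<Sum>k<n. norm (g (r k) - g (l k))) < \<epsilon> / 2"
    by (rule AC_onE[OF assms(2) \<open>0 < \<epsilon> / 2\<close>]) (rule that; assumption)
  have "(\<Sum>k<n. norm ((f (r k), g (r k)) - (f (l k), g (l k)))) < \<epsilon>"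
    if "nonoverlapping_intervals a b n l r" "(\<Sum>k<n. r k - l k) < min \<delta>f \<delta>g" for n l r
  proof -
    have "(\<Sum>k<n. norm ((f (r k), g (r k)) - (f (l k), g (l k))))
        \<le> (\<Sum>k<n. norm (f (r k) - f (l k))) + (\<Sum>k<n. norm (g (r k) - g (l k)))"
      unfolding sum.distrib[symmetric] by (intro sum_mono) (simp add: norm_Pair_le)
    also have "\<dots> < \<epsilon> / 2 + \<epsilon> / 2"
      using that by (intro add_strict_mono \<delta>f \<delta>g) auto
    finally show ?thesis by simp
  qed
  moreover have "0 < min \<delta>f \<delta>g" using \<open>0 < \<delta>f\<close> \<open>0 < \<delta>g\<close> by simp
  ultimately show "\<exists>\<delta>>0. \<forall>n l r. nonoverlapping_intervals a b n l r \<and> (\<Sum>k<n. r k - l k) < \<delta> \<longrightarrow>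
      (\<Sum>k<n. norm ((f (r k), g (r k)) - (f (l k), g (l k)))) < \<epsilon>"
    by blast
qed

lemma AC_on_dominated:
  assumes "AC_on a b f" "0 \<le> C"
    and "\<And>x y. x \<in> {a..b} \<Longrightarrow> y \<in> {a..b} \<Longrightarrow> norm (g x - g y) \<le> C * norm (f x - f y)"
  shows "AC_on a b g"
  unfolding AC_on_iff
proof (intro allI impI)
  fix \<epsilon> :: real
  assume "0 < \<epsilon>"
  then have "0 < \<epsilon> / (C + 1)" using \<open>0 \<le> C\<close> by simp
  obtain \<delta> where "0 < \<delta>" and \<delta>: "\<And>n l r. nonoverlapping_intervals a b n l r \<Longrightarrow>
      (\<Sum>k<n. r k - l k) < \<delta> \<Longrightarrow> (\<Sum>k<n. norm (f (r k) - f (l k))) < \<epsilon> / (C + 1)"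
    by (rule AC_onE[OF assms(1) \<open>0 < \<epsilon> / (C + 1)\<close>]) (rule that; assumption)
  have "(\<Sum>k<n. norm (g (r k) - g (l k))) < \<epsilon>"
    if "nonoverlapping_intervals a b n l r" "(\<Sum>k<n. r k - l k) < \<delta>" for n l r
  proof -
    have "(\<Sum>k<n. norm (g (r k) - g (l k))) \<le> C * (\<Sum>k<n. norm (f (r k) - f (l k)))"
      unfolding sum_distrib_left using that(1)
      by (intro sum_mono assms(3)) (auto simp: nonoverlapping_intervals_def)
    also have "\<dots> \<le> C * (\<epsilon> / (C + 1))"
      using \<delta>[OF that] \<open>0 \<le> C\<close> by (intro mult_left_mono) auto
    also have "\<dots> < \<epsilon>"
      using \<open>0 < \<epsilon>\<close> \<open>0 \<le> C\<close> by (simp add: field_simps)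
    finally show ?thesis .
  qed
  with \<open>0 < \<delta>\<close> show "\<exists>\<delta>>0. \<forall>n l r. nonoverlapping_intervals a b n l r \<and> (\<Sum>k<n. r k - l k) < \<delta> \<longrightarrow>
      (\<Sum>k<n. norm (g (r k) - g (l k))) < \<epsilon>"
    by blast
qed

lemma lipschitz_on_compact_if_continuous_derivative:
  fixes f :: "'a::euclidean_space \<Rightarrow> real"
  assumes "compact K" "open W" "K \<subseteq> W"
    and f': "\<And>x. x \<in> W \<Longrightarrow> (f has_derivative (\<lambda>v. Df x \<bullet> v)) (at x)"
    and "continuous_on W Df"
  obtains L where "L-lipschitz_on K f"
proof -
  have "local_lipschitz {0::real} K (\<lambda>_. f)"
  proof (rule local_lipschitzI)
    fix x assume "x \<in> K"
    then obtain u where "0 < u" and u: "cball x u \<subseteq> W"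
      using \<open>open W\<close> \<open>K \<subseteq> W\<close> open_contains_cball by blast
    have "compact (Df ` cball x u)"
      using continuous_on_subset[OF \<open>continuous_on W Df\<close> u] by (intro compact_continuous_image) auto
    then obtain B where "0 < B" and B: "\<And>y. y \<in> cball x u \<Longrightarrow> norm (Df y) \<le> B"
      by (auto dest!: compact_imp_bounded simp: bounded_pos)
    have "onorm (\<lambda>v. Df y \<bullet> v) \<le> B" if "y \<in> cball x u" for y
    proof (rule onorm_bound)
      show "norm (Df y \<bullet> v) \<le> B * norm v" for v
        using Cauchy_Schwarz_ineq2[of "Df y" v] B[OF that]
        by (metis norm_ge_zero mult_right_mono order_trans real_norm_def)
    qed (use \<open>0 < B\<close> in simp)
    moreover have "(f has_derivative (\<lambda>v. Df y \<bullet> v)) (at y within cball x u)" if "y \<in> cball x u" for y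
      using f' u that by (blast intro: has_derivative_at_withinI)
    ultimately have "B-lipschitz_on (cball x u) f"
      using \<open>0 < B\<close> by (intro bounded_derivative_imp_lipschitz) auto
    then show "\<exists>u>0. \<exists>L. \<forall>t\<in>cball t u \<inter> {0}. L-lipschitz_on (cball x u \<inter> K) f" for t
      using \<open>0 < u\<close> by (meson inf_le1 lipschitz_on_subset)
  qed
  then show ?thesis
    using local_lipschitz_compact_implies_lipschitz[OF _ \<open>compact K\<close> compact_sing] that by auto
qed

lemma weighted_increment_bound:
  fixes p q :: "'a::real_normed_vector" and \<phi> :: "'a \<Rightarrow> real"
  assumes "0 \<le> c" "c \<le> M" "0 \<le> L" "\<bar>\<phi> p\<bar> \<le> B" "norm p \<le> R"
    and "\<bar>\<phi> p - \<phi> q\<bar> \<le> L * norm (p - q)"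
  shows "\<bar>a\<^sup>2 * \<phi> p - c\<^sup>2 * \<phi> q\<bar> \<le> B * \<bar>a\<^sup>2 - c\<^sup>2\<bar> + L * M * R * \<bar>a - c\<bar> + L * M * norm (a *\<^sub>R p - c *\<^sub>R q)"
proof -
  have "c *\<^sub>R (p - q) = (c - a) *\<^sub>R p + (a *\<^sub>R p - c *\<^sub>R q)"
    by (simp add: algebra_simps)
  then have "c * norm (p - q) = norm ((c - a) *\<^sub>R p + (a *\<^sub>R p - c *\<^sub>R q))"
    using \<open>0 \<le> c\<close> by (metis abs_of_nonneg norm_scaleR)
  also have "\<dots> \<le> \<bar>a - c\<bar> * R + norm (a *\<^sub>R p - c *\<^sub>R q)"
    using \<open>norm p \<le> R\<close> by (intro order_trans[OF norm_triangle_ineq] add_right_mono)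
      (simp add: abs_minus_commute mult_left_mono)
  finally have c_dist: "c * norm (p - q) \<le> \<bar>a - c\<bar> * R + norm (a *\<^sub>R p - c *\<^sub>R q)" .
  have "\<bar>a\<^sup>2 * \<phi> p - c\<^sup>2 * \<phi> q\<bar> = \<bar>(a\<^sup>2 - c\<^sup>2) * \<phi> p + c * (c * (\<phi> p - \<phi> q))\<bar>"
    by (simp add: algebra_simps power2_eq_square)
  also have "\<dots> \<le> \<bar>a\<^sup>2 - c\<^sup>2\<bar> * B + c * (L * (c * norm (p - q)))"
  proof (intro order_trans[OF abs_triangle_ineq] add_mono)
    show "\<bar>(a\<^sup>2 - c\<^sup>2) * \<phi> p\<bar> \<le> \<bar>a\<^sup>2 - c\<^sup>2\<bar> * B"
      using assms(4) by (simp add: abs_mult mult_left_mono)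
    have "c * \<bar>\<phi> p - \<phi> q\<bar> \<le> c * (L * norm (p - q))"
      using assms(1,6) by (rule mult_left_mono[rotated])
    then have "c * (c * \<bar>\<phi> p - \<phi> q\<bar>) \<le> c * (c * (L * norm (p - q)))"
      using assms(1) by (rule mult_left_mono)
    then show "\<bar>c * (c * (\<phi> p - \<phi> q))\<bar> \<le> c * (L * (c * norm (p - q)))"
      using assms(1) by (simp add: abs_mult mult.left_commute)
  qed
  also have "\<dots> \<le> \<bar>a\<^sup>2 - c\<^sup>2\<bar> * B + M * (L * (\<bar>a - c\<bar> * R + norm (a *\<^sub>R p - c *\<^sub>R q)))"
    using assms c_dist by (intro add_left_mono mult_mono mult_left_mono) auto
  finally show ?thesis by (simp add: algebra_simps)
qed

lemma AC_on_mass_times_observable: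
  fixes h :: "real \<Rightarrow> real" and \<gamma> :: "real \<Rightarrow> 'a::real_normed_vector" and \<phi> :: "'a \<Rightarrow> real"
  assumes ACh: "AC_on a b h" and ACs: "AC_on a b (\<lambda>t. sqrt (h t))"
    and ACw: "AC_on a b (\<lambda>t. sqrt (h t) *\<^sub>R \<gamma> t)"
    and h_nonneg: "\<And>t. t \<in> {a..b} \<Longrightarrow> 0 \<le> h t"
    and \<gamma>_in: "\<And>t. t \<in> {a..b} \<Longrightarrow> 0 < h t \<Longrightarrow> \<gamma> t \<in> V"
    and "compact V" "V \<noteq> {}" and L: "L-lipschitz_on V \<phi>"
  shows "AC_on a b (\<lambda>t. h t * \<phi> (\<gamma> t))"
proof -
  obtain v where "v \<in> V" using \<open>V \<noteq> {}\<close> by blast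
  txt \<open>Off \<open>{h = 0}\<close> the curve is unconstrained; moving it into \<open>V\<close> there changes neither
    \<open>h \<phi>(\<gamma>)\<close> nor \<open>\<surd>h \<gamma>\<close>.\<close>
  define \<gamma>' where "\<gamma>' t = (if h t = 0 then v else \<gamma> t)" for t
  have \<gamma>'_in: "\<gamma>' t \<in> V" if "t \<in> {a..b}" for t
    using h_nonneg[OF that] \<gamma>_in[OF that] \<open>v \<in> V\<close> by (auto simp: \<gamma>'_def)
  have F_eq: "h t * \<phi> (\<gamma> t) = (sqrt (h t))\<^sup>2 * \<phi> (\<gamma>' t)"
    if "t \<in> {a..b}" for t
    using h_nonneg[OF that] by (simp add: \<gamma>'_def)
  have w_eq: "sqrt (h t) *\<^sub>R \<gamma> t = sqrt (h t) *\<^sub>R \<gamma>' t" for t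
    by (simp add: \<gamma>'_def)
  obtain B where "0 < B" and B: "\<And>p. p \<in> V \<Longrightarrow> \<bar>\<phi> p\<bar> \<le> B"
    using compact_continuous_image[OF lipschitz_on_continuous_on[OF L] \<open>compact V\<close>]
    by (auto dest!: compact_imp_bounded simp: bounded_pos)
  obtain R where "0 < R" and R: "\<And>p. p \<in> V \<Longrightarrow> norm p \<le> R"
    using compact_imp_bounded[OF \<open>compact V\<close>] by (auto simp: bounded_pos)
  obtain M where "0 < M" and M: "\<And>t. t \<in> {a..b} \<Longrightarrow> sqrt (h t) \<le> M"
    using compact_continuous_image[OF AC_on_imp_continuous_on[OF ACs] compact_Icc]
    by (force dest!: compact_imp_bounded simp: bounded_pos)
  have "0 \<le> L" using L lipschitz_on_nonneg by blast
  have "AC_on a b (\<lambda>t. (h t, sqrt (h t), sqrt (h t) *\<^sub>R \<gamma>' t))"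
    using AC_on_Pair[OF ACh AC_on_Pair[OF ACs ACw]] by (simp only: w_eq)
  then show ?thesis
  proof (rule AC_on_dominated)
    show "0 \<le> B + L * M * R + L * M"
      using \<open>0 < B\<close> \<open>0 \<le> L\<close> \<open>0 < M\<close> \<open>0 < R\<close> by simp
    fix x y assume x: "x \<in> {a..b}" and y: "y \<in> {a..b}"
    let ?D = "norm ((h x, sqrt (h x), sqrt (h x) *\<^sub>R \<gamma>' x) - (h y, sqrt (h y), sqrt (h y) *\<^sub>R \<gamma>' y))"
    have D_eq: "?D = norm (h x - h y, sqrt (h x) - sqrt (h y), sqrt (h x) *\<^sub>R \<gamma>' x - sqrt (h y) *\<^sub>R \<gamma>' y)"
      by simp
    have D: "\<bar>h x - h y\<bar> \<le> ?D" "\<bar>sqrt (h x) - sqrt (h y)\<bar> \<le> ?D"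
      "norm (sqrt (h x) *\<^sub>R \<gamma>' x - sqrt (h y) *\<^sub>R \<gamma>' y) \<le> ?D"
      unfolding D_eq real_norm_def[symmetric]
      by (rule norm_fst_le order_trans[OF norm_fst_le norm_snd_le] order_trans[OF norm_snd_le norm_snd_le])+
    have "norm (h x * \<phi> (\<gamma> x) - h y * \<phi> (\<gamma> y))
        \<le> B * \<bar>h x - h y\<bar> + L * M * R * \<bar>sqrt (h x) - sqrt (h y)\<bar>
          + L * M * norm (sqrt (h x) *\<^sub>R \<gamma>' x - sqrt (h y) *\<^sub>R \<gamma>' y)"
      unfolding F_eq[OF x] F_eq[OF y] real_norm_def
      using weighted_increment_bound[of "sqrt (h y)" M L \<phi> "\<gamma>' x" B R "\<gamma>' y" "sqrt (h x)"]
        \<gamma>'_in[OF x] \<gamma>'_in[OF y] \<open>0 \<le> L\<close> M[OF y] B R h_nonneg[OF x] h_nonneg[OF y]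
        lipschitz_onD[OF L, of "\<gamma>' x" "\<gamma>' y"]
      by (simp add: dist_norm)
    also have "\<dots> \<le> B * ?D + L * M * R * ?D + L * M * ?D"
      using D \<open>0 < B\<close> \<open>0 \<le> L\<close> \<open>0 < M\<close> \<open>0 < R\<close> by (intro add_mono mult_left_mono) auto
    finally show "norm (h x * \<phi> (\<gamma> x) - h y * \<phi> (\<gamma> y))
        \<le> (B + L * M * R + L * M) * ?D"
      by (simp add: algebra_simps)
  qed
qed

lemma has_real_derivative_zero_if_dominated:
  fixes f h :: "real \<Rightarrow> real"
  assumes h': "(h has_real_derivative h') (at t)" and "h t = 0" "0 < d"
    and dom: "\<And>y. \<bar>y - t\<bar> < d \<Longrightarrow> 0 \<le> h y \<and> \<bar>f y\<bar> \<le> M * h y"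
  shows "(f has_real_derivative 0) (at t)"
  unfolding has_field_derivative_iff
proof (rule Lim_null_comparison)
  have "h' = 0"
    using DERIV_local_min[OF h' \<open>0 < d\<close>] dom \<open>h t = 0\<close> by (simp add: abs_minus_commute)
  then have "((\<lambda>y. (h y - h t) / (y - t)) \<longlongrightarrow> 0) (at t)"
    using h' by (simp add: has_field_derivative_iff)
  then show "((\<lambda>y. M * \<bar>(h y - h t) / (y - t)\<bar>) \<longlongrightarrow> 0) (at t)"
    by (intro tendsto_mult_right_zero tendsto_rabs_zero)
  have "f t = 0" using dom[of t] \<open>h t = 0\<close> \<open>0 < d\<close> by simp
  then have "norm ((f y - f t) / (y - t)) \<le> M * \<bar>(h y - h t) / (y - t)\<bar>" if "\<bar>y - t\<bar> < d" for y
    using dom[OF that] \<open>h t = 0\<close> by (simp add: abs_divide divide_right_mono)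
  then show "\<forall>\<^sub>F y in at t. norm ((f y - f t) / (y - t)) \<le> M * \<bar>(h y - h t) / (y - t)\<bar>"
    unfolding eventually_at using \<open>0 < d\<close> by (auto simp: dist_real_def)
qed

lemma has_vector_derivative_scaleR_quotient:
  fixes s :: "real \<Rightarrow> real" and w \<gamma> :: "real \<Rightarrow> 'a::real_normed_vector"
  assumes s': "(s has_real_derivative s') (at t)" and w': "(w has_vector_derivative w') (at t)"
    and "s t \<noteq> 0" and w_eq: "\<forall>\<^sub>F y in nhds t. w y = s y *\<^sub>R \<gamma> y"
  shows "(\<gamma> has_vector_derivative (w' - s' *\<^sub>R \<gamma> t) /\<^sub>R s t) (at t)"
proof -
  have "\<forall>\<^sub>F y in at t. s y \<noteq> 0"
    using DERIV_isCont[OF s'] \<open>s t \<noteq> 0\<close> unfolding isCont_def by (rule tendsto_imp_eventually_ne)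
  then have "\<forall>\<^sub>F y in nhds t. s y \<noteq> 0"
    using \<open>s t \<noteq> 0\<close> by (auto simp: eventually_at_filter elim: eventually_mono)
  with w_eq have \<gamma>_eq: "\<forall>\<^sub>F y in nhds t. inverse (s y) *\<^sub>R w y = \<gamma> y"
    by eventually_elim simp
  have "((\<lambda>y. inverse (s y) *\<^sub>R w y) has_vector_derivative
      inverse (s t) *\<^sub>R w' + (- (s' * inverse (s t ^ 2))) *\<^sub>R w t) (at t)"
    using has_vector_derivative_scaleR[OF DERIV_inverse_fun[OF s' \<open>s t \<noteq> 0\<close>] w'] by (simp add: power2_eq_square)
  moreover have "inverse (s t) *\<^sub>R w' + (- (s' * inverse (s t ^ 2))) *\<^sub>R w t = (w' - s' *\<^sub>R \<gamma> t) /\<^sub>R s t"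
    using eventually_nhds_x_imp_x[OF w_eq] \<open>s t \<noteq> 0\<close>
    by (simp add: scaleR_diff_right power2_eq_square field_simps)
  ultimately show ?thesis
    using has_vector_derivative_cong_ev[where f = "\<lambda>y. inverse (s y) *\<^sub>R w y" and g = \<gamma> and S = UNIV]
      \<gamma>_eq eventually_nhds_x_imp_x[OF \<gamma>_eq] by simp
qed

lemma has_derivative_mass_times_observable:
  fixes h :: "real \<Rightarrow> real" and \<gamma> :: "real \<Rightarrow> 'a::real_inner" and \<phi> :: "'a \<Rightarrow> real"
  assumes t: "t \<in> {a<..<b}"
    and h_nonneg: "\<And>x. x \<in> {a..b} \<Longrightarrow> 0 \<le> h x"
    and \<gamma>_in: "\<And>x. x \<in> {a..b} \<Longrightarrow> 0 < h x \<Longrightarrow> \<gamma> x \<in> V"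
    and B: "\<And>p. p \<in> V \<Longrightarrow> \<bar>\<phi> p\<bar> \<le> B"
    and \<phi>': "\<And>p. p \<in> V \<Longrightarrow> (\<phi> has_derivative (\<lambda>v. D\<phi> p \<bullet> v)) (at p)"
    and h': "(h has_real_derivative dh) (at t)"
    and s': "((\<lambda>x. sqrt (h x)) has_real_derivative ds) (at t)"
    and w': "((\<lambda>x. sqrt (h x) *\<^sub>R \<gamma> x) has_vector_derivative dw) (at t)"
  shows "(h t \<noteq> 0 \<longrightarrow> (\<gamma> has_vector_derivative (dw - ds *\<^sub>R \<gamma> t) /\<^sub>R sqrt (h t)) (at t))
    \<and> ((\<lambda>x. h x * \<phi> (\<gamma> x)) has_real_derivative
        (if h t = 0 then 0 else dh * \<phi> (\<gamma> t) + h t * (D\<phi> (\<gamma> t) \<bullet> ((dw - ds *\<^sub>R \<gamma> t) /\<^sub>R sqrt (h t)))))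
        (at t)"
proof (cases "h t = 0")
  case True
  have "((\<lambda>x. h x * \<phi> (\<gamma> x)) has_real_derivative 0) (at t)"
  proof (rule has_real_derivative_zero_if_dominated[OF h' True])
    show "0 < min (t - a) (b - t)" using t by simp
    fix y assume "\<bar>y - t\<bar> < min (t - a) (b - t)"
    then have y: "y \<in> {a..b}" by auto
    show "0 \<le> h y \<and> \<bar>h y * \<phi> (\<gamma> y)\<bar> \<le> B * h y"
      using h_nonneg[OF y] \<gamma>_in[OF y] B by (cases "h y = 0") (auto simp: abs_mult mult.commute)
  qed
  with True show ?thesis by simp
next
  case False
  with h_nonneg t have "0 < h t" by (simp add: order_less_le)
  let ?\<gamma>d = "(dw - ds *\<^sub>R \<gamma> t) /\<^sub>R sqrt (h t)"
  have \<gamma>': "(\<gamma> has_vector_derivative ?\<gamma>d) (at t)"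
    using \<open>0 < h t\<close> by (intro has_vector_derivative_scaleR_quotient[OF s' w']) auto
  have "\<gamma> t \<in> V" using \<gamma>_in \<open>0 < h t\<close> t by simp
  from has_derivative_compose[OF \<gamma>'[unfolded has_vector_derivative_def] \<phi>'[OF this]]
  have "((\<lambda>x. \<phi> (\<gamma> x)) has_real_derivative D\<phi> (\<gamma> t) \<bullet> ?\<gamma>d) (at t)"
    unfolding has_field_derivative_def by (rule has_derivative_eq_rhs) (simp add: fun_eq_iff mult.commute)
  from DERIV_mult[OF h' this] \<gamma>' False show ?thesis by (simp add: ac_simps)
qed

lemma square_integrable_bounded_combination:
  fixes f g :: "'b \<Rightarrow> real" and v c :: "'b \<Rightarrow> 'a::euclidean_space"
  assumes [measurable]: "f \<in> borel_measurable M" "g \<in> borel_measurable M" "v \<in> borel_measurable M"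
      "c\<^sub>1 \<in> borel_measurable M" "c\<^sub>2 \<in> borel_measurable M" "c \<in> borel_measurable M"
    and "integrable M (\<lambda>x. (norm (f x))\<^sup>2)" "integrable M (\<lambda>x. (norm (g x))\<^sup>2)"
      "integrable M (\<lambda>x. (norm (v x))\<^sup>2)"
    and bound: "\<And>x. x \<in> space M \<Longrightarrow> \<bar>c\<^sub>1 x\<bar> \<le> K \<and> \<bar>c\<^sub>2 x\<bar> \<le> K \<and> norm (c x) \<le> K"
  shows "integrable M (\<lambda>x. (norm (c\<^sub>1 x * f x + c\<^sub>2 x * g x + c x \<bullet> v x))\<^sup>2)"
proof (rule Bochner_Integration.integrable_bound)
  show "integrable M (\<lambda>x. 3 * K\<^sup>2 * ((norm (f x))\<^sup>2 + (norm (g x))\<^sup>2 + (norm (v x))\<^sup>2))"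
    using assms(7-9) by (intro Bochner_Integration.integrable_mult_right Bochner_Integration.integrable_add)
  show "(\<lambda>x. (norm (c\<^sub>1 x * f x + c\<^sub>2 x * g x + c x \<bullet> v x))\<^sup>2) \<in> borel_measurable M"
    by measurable
  have "(norm (c\<^sub>1 x * f x + c\<^sub>2 x * g x + c x \<bullet> v x))\<^sup>2
      \<le> 3 * K\<^sup>2 * ((norm (f x))\<^sup>2 + (norm (g x))\<^sup>2 + (norm (v x))\<^sup>2)" if "x \<in> space M" for x
  proof -
    have sum_sq: "(p + q + r)\<^sup>2 \<le> 3 * (p\<^sup>2 + q\<^sup>2 + r\<^sup>2)" for p q r :: real
    proof -
      have "0 \<le> (p - q)\<^sup>2 + (q - r)\<^sup>2 + (p - r)\<^sup>2" by simp
      then show ?thesis by (simp add: power2_eq_square algebra_simps)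
    qed
    have "\<bar>c x \<bullet> v x\<bar> \<le> K * norm (v x)"
      using Cauchy_Schwarz_ineq2 bound[OF that] by (meson mult_right_mono norm_ge_zero order_trans)
    then have "norm (c\<^sub>1 x * f x + c\<^sub>2 x * g x + c x \<bullet> v x) \<le> K * (\<bar>f x\<bar> + \<bar>g x\<bar> + norm (v x))"
      using bound[OF that] by (simp add: abs_mult distrib_left abs_triangle_ineq
          add_mono mult_right_mono order_trans[OF abs_triangle_ineq])
    then have "(norm (c\<^sub>1 x * f x + c\<^sub>2 x * g x + c x \<bullet> v x))\<^sup>2 \<le> K\<^sup>2 * (\<bar>f x\<bar> + \<bar>g x\<bar> + norm (v x))\<^sup>2"
      by (metis norm_ge_zero power_mono power_mult_distrib)
    also have "\<dots> \<le> K\<^sup>2 * (3 * ((norm (f x))\<^sup>2 + (norm (g x))\<^sup>2 + (norm (v x))\<^sup>2))"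
      using sum_sq[of "\<bar>f x\<bar>" "\<bar>g x\<bar>" "norm (v x)"] by (intro mult_left_mono) simp_all
    finally show ?thesis by (simp add: algebra_simps)
  qed
  then show "AE x in M. norm ((norm (c\<^sub>1 x * f x + c\<^sub>2 x * g x + c x \<bullet> v x))\<^sup>2)
      \<le> norm (3 * K\<^sup>2 * ((norm (f x))\<^sup>2 + (norm (g x))\<^sup>2 + (norm (v x))\<^sup>2))"
    by (intro AE_I2) simp
qed

lemma open_continuous_on_positive_mass:
  fixes \<gamma> :: "real \<Rightarrow> 'a::real_normed_vector"
  assumes h: "continuous_on {a..b} h" and w: "continuous_on {a..b} (\<lambda>t. sqrt (h t) *\<^sub>R \<gamma> t)"
  shows "open {t \<in> {a<..<b}. h t \<noteq> 0}" and "continuous_on {t \<in> {a<..<b}. h t \<noteq> 0} \<gamma>"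
proof -
  have "open ({a<..<b} \<inter> h -` (- {0}))"
    by (rule continuous_open_preimage[OF continuous_on_subset[OF h]]) auto
  moreover have "{a<..<b} \<inter> h -` (- {0}) = {t \<in> {a<..<b}. h t \<noteq> 0}"
    by auto
  ultimately show "open {t \<in> {a<..<b}. h t \<noteq> 0}"
    by simp
  have "{t \<in> {a<..<b}. h t \<noteq> 0} \<subseteq> {a..b}"
    by auto
  then have "continuous_on {t \<in> {a<..<b}. h t \<noteq> 0} h"
    and w': "continuous_on {t \<in> {a<..<b}. h t \<noteq> 0} (\<lambda>t. sqrt (h t) *\<^sub>R \<gamma> t)"
    using continuous_on_subset h w by blast+
  then have "continuous_on {t \<in> {a<..<b}. h t \<noteq> 0} (\<lambda>t. inverse (sqrt (h t)))"
    by (intro continuous_on_inverse continuous_on_real_sqrt) auto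
  from continuous_on_scaleR[OF this w']
  have "continuous_on {t \<in> {a<..<b}. h t \<noteq> 0} (\<lambda>t. inverse (sqrt (h t)) *\<^sub>R (sqrt (h t) *\<^sub>R \<gamma> t))" .
  then show "continuous_on {t \<in> {a<..<b}. h t \<noteq> 0} \<gamma>"
    by (rule continuous_on_eq) simp
qed

lemma square_integrable_mass_times_observable_derivative:
  fixes h :: "real \<Rightarrow> real" and \<gamma> :: "real \<Rightarrow> 'a::euclidean_space" and \<phi> :: "'a \<Rightarrow> real"
  assumes h_nonneg: "\<And>t. t \<in> {0..1} \<Longrightarrow> 0 \<le> h t"
    and \<gamma>_in: "\<And>t. t \<in> {0..1} \<Longrightarrow> 0 < h t \<Longrightarrow> \<gamma> t \<in> V"
    and "compact V" "continuous_on V \<phi>" "continuous_on V D\<phi>"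
    and h: "continuous_on {0..1} h" and w: "continuous_on {0..1} (\<lambda>t. sqrt (h t) *\<^sub>R \<gamma> t)"
    and [measurable]: "dh \<in> borel_measurable lborel" "ds \<in> borel_measurable lborel"
      "dw \<in> borel_measurable lborel"
    and L2: "integrable (restrict_space lborel {0..1}) (\<lambda>t. (norm (dh t))\<^sup>2)"
      "integrable (restrict_space lborel {0..1}) (\<lambda>t. (norm (ds t))\<^sup>2)"
      "integrable (restrict_space lborel {0..1}) (\<lambda>t. (norm (dw t))\<^sup>2)"
  obtains G where "G \<in> borel_measurable lborel"
    "integrable (restrict_space lborel {0..1}) (\<lambda>t. (norm (G t))\<^sup>2)"
    "\<And>t. t \<in> {0<..<1} \<Longrightarrow> G t = (if h t = 0 then 0
       else dh t * \<phi> (\<gamma> t) + h t * (D\<phi> (\<gamma> t) \<bullet> ((dw t - ds t *\<^sub>R \<gamma> t) /\<^sub>R sqrt (h t))))"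
proof -
  define S where "S = {t \<in> {0<..<1}. h t \<noteq> 0}"
  have "S \<in> sets borel" and \<gamma>_cont: "continuous_on S \<gamma>"
    using open_continuous_on_positive_mass[OF h w] by (simp_all add: S_def)
  have S: "t \<in> {0..1}" "0 < h t" if "t \<in> S" for t
    using that h_nonneg[of t] by (auto simp: S_def less_le)
  then have "S \<subseteq> {0..1}" "\<gamma> ` S \<subseteq> V" using \<gamma>_in by auto
  have "continuous_on S h"
    using h \<open>S \<subseteq> {0..1}\<close> by (rule continuous_on_subset)
  moreover have "continuous_on S (\<lambda>t. \<phi> (\<gamma> t))" "continuous_on S (\<lambda>t. D\<phi> (\<gamma> t))"
    using \<open>\<gamma> ` S \<subseteq> V\<close> by (auto intro: continuous_on_compose2[OF _ \<gamma>_cont] assms(4,5))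
  ultimately have coeff_cont: "continuous_on S (\<lambda>t. \<phi> (\<gamma> t))"
    "continuous_on S (\<lambda>t. - (sqrt (h t) * (D\<phi> (\<gamma> t) \<bullet> \<gamma> t)))"
    "continuous_on S (\<lambda>t. sqrt (h t) *\<^sub>R D\<phi> (\<gamma> t))"
    using \<gamma>_cont by (auto intro!: continuous_intros)
  txt \<open>The candidate derivative is \<open>c\<^sub>1 dh + c\<^sub>2 ds + c \<bullet> dw\<close>, with coefficients that vanish off
    \<open>S\<close> and are continuous on the open set \<open>S\<close>, hence Borel measurable.\<close>
  define c\<^sub>1 where "c\<^sub>1 t = indicator S t *\<^sub>R \<phi> (\<gamma> t)" for t
  define c\<^sub>2 where "c\<^sub>2 t = indicator S t *\<^sub>R - (sqrt (h t) * (D\<phi> (\<gamma> t) \<bullet> \<gamma> t))" for t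
  define c where "c t = indicator S t *\<^sub>R (sqrt (h t) *\<^sub>R D\<phi> (\<gamma> t))" for t
  note indicator_measurable = borel_measurable_continuous_on_indicator[OF \<open>S \<in> sets borel\<close>]
  have [measurable]: "c\<^sub>1 \<in> borel_measurable borel" "c\<^sub>2 \<in> borel_measurable borel" "c \<in> borel_measurable borel"
    unfolding c\<^sub>1_def[abs_def] c\<^sub>2_def[abs_def] c_def[abs_def]
    by (rule indicator_measurable[OF coeff_cont(1)] indicator_measurable[OF coeff_cont(2)]
        indicator_measurable[OF coeff_cont(3)])+
  have "continuous_on V (\<lambda>p. (\<phi> p, D\<phi> p \<bullet> p, D\<phi> p))"
    using assms(4,5) by (intro continuous_on_Pair continuous_on_inner continuous_on_id)
  then have "bounded ((\<lambda>p. (\<phi> p, D\<phi> p \<bullet> p, D\<phi> p)) ` V)"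
    using \<open>compact V\<close> by (intro compact_imp_bounded compact_continuous_image)
  then obtain C where "0 < C" and C: "\<And>p. p \<in> V \<Longrightarrow> norm (\<phi> p, D\<phi> p \<bullet> p, D\<phi> p) \<le> C"
    by (auto simp: bounded_pos)
  obtain M where "0 < M" and M: "\<And>t. t \<in> {0..1} \<Longrightarrow> sqrt (h t) \<le> M"
    using compact_continuous_image[OF continuous_on_real_sqrt[OF h] compact_Icc]
    by (force dest!: compact_imp_bounded simp: bounded_pos)
  have "\<bar>c\<^sub>1 t\<bar> \<le> C + M * C \<and> \<bar>c\<^sub>2 t\<bar> \<le> C + M * C \<and> norm (c t) \<le> C + M * C" for t
  proof (cases "t \<in> S")
    case True
    then have "\<gamma> t \<in> V" "0 \<le> sqrt (h t)" "sqrt (h t) \<le> M"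
      using \<open>\<gamma> ` S \<subseteq> V\<close> S[OF True] M by (auto simp: less_imp_le)
    then have C\<gamma>: "norm (\<phi> (\<gamma> t), D\<phi> (\<gamma> t) \<bullet> \<gamma> t, D\<phi> (\<gamma> t)) \<le> C"
      using C by blast
    have "\<bar>\<phi> (\<gamma> t)\<bar> \<le> C" "\<bar>D\<phi> (\<gamma> t) \<bullet> \<gamma> t\<bar> \<le> C" "norm (D\<phi> (\<gamma> t)) \<le> C"
      using order_trans[OF norm_fst_le C\<gamma>] order_trans[OF order_trans[OF norm_fst_le norm_snd_le] C\<gamma>]
        order_trans[OF order_trans[OF norm_snd_le norm_snd_le] C\<gamma>] by simp_all
    then have "sqrt (h t) * \<bar>D\<phi> (\<gamma> t) \<bullet> \<gamma> t\<bar> \<le> M * C" "sqrt (h t) * norm (D\<phi> (\<gamma> t)) \<le> M * C"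
      using \<open>0 \<le> sqrt (h t)\<close> \<open>sqrt (h t) \<le> M\<close> \<open>0 < M\<close> by (auto intro!: mult_mono)
    with True \<open>\<bar>\<phi> (\<gamma> t)\<bar> \<le> C\<close> \<open>0 \<le> sqrt (h t)\<close> \<open>0 < M\<close> \<open>0 < C\<close> show ?thesis
      by (simp add: c\<^sub>1_def c\<^sub>2_def c_def abs_mult add_increasing2)
  qed (use \<open>0 < C\<close> \<open>0 < M\<close> in \<open>simp add: c\<^sub>1_def c\<^sub>2_def c_def\<close>)
  then have "integrable (restrict_space lborel {0..1})
      (\<lambda>t. (norm (c\<^sub>1 t * dh t + c\<^sub>2 t * ds t + c t \<bullet> dw t))\<^sup>2)"
    by (intro square_integrable_bounded_combination L2) (auto intro: measurable_restrict_space1)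
  moreover have "c\<^sub>1 t * dh t + c\<^sub>2 t * ds t + c t \<bullet> dw t = (if t \<in> S then dh t * \<phi> (\<gamma> t)
      + h t * (D\<phi> (\<gamma> t) \<bullet> ((dw t - ds t *\<^sub>R \<gamma> t) /\<^sub>R sqrt (h t))) else 0)" for t
  proof (cases "t \<in> S")
    case True
    have "h t * (D\<phi> (\<gamma> t) \<bullet> ((dw t - ds t *\<^sub>R \<gamma> t) /\<^sub>R sqrt (h t)))
        = h t / sqrt (h t) * (D\<phi> (\<gamma> t) \<bullet> (dw t - ds t *\<^sub>R \<gamma> t))"
      by (simp add: divide_inverse mult.assoc)
    also have "\<dots> = sqrt (h t) * (D\<phi> (\<gamma> t) \<bullet> (dw t - ds t *\<^sub>R \<gamma> t))"
      using S(2)[OF True] by (simp add: real_div_sqrt)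
    finally show ?thesis
      using True by (simp add: c\<^sub>1_def c\<^sub>2_def c_def inner_diff_right algebra_simps)
  qed (simp add: c\<^sub>1_def c\<^sub>2_def c_def)
  moreover have "(\<lambda>t. c\<^sub>1 t * dh t + c\<^sub>2 t * ds t + c t \<bullet> dw t) \<in> borel_measurable lborel"
    by measurable
  ultimately show ?thesis
    by (intro that[of "\<lambda>t. c\<^sub>1 t * dh t + c\<^sub>2 t * ds t + c t \<bullet> dw t"]) (auto simp: S_def)
qed

lemma AC2E:
  assumes "AC2 f"
  obtains g where "AC_on 0 1 f" "g \<in> borel_measurable lborel"
    "integrable (restrict_space lborel {0..1}) (\<lambda>t. (norm (g t))\<^sup>2)"
    "AE t in lborel. t \<in> {0<..<1} \<longrightarrow> (f has_vector_derivative g t) (at t)"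
  using assms unfolding AC2_def by blast

lemma AC2_derivative_mass_times_observable:
  fixes h :: "real \<Rightarrow> real" and \<gamma> :: "real \<Rightarrow> 'a::euclidean_space" and \<phi> :: "'a \<Rightarrow> real"
  assumes "AC2 h" "AC2 (\<lambda>t. sqrt (h t))" "AC2 (\<lambda>t. sqrt (h t) *\<^sub>R \<gamma> t)"
    and h_nonneg: "\<And>t. t \<in> {0..1} \<Longrightarrow> 0 \<le> h t"
    and \<gamma>_in: "\<And>t. t \<in> {0..1} \<Longrightarrow> 0 < h t \<Longrightarrow> \<gamma> t \<in> V"
    and "compact V" "continuous_on V D\<phi>"
    and \<phi>': "\<And>p. p \<in> V \<Longrightarrow> (\<phi> has_derivative (\<lambda>v. D\<phi> p \<bullet> v)) (at p)"
  obtains G where "G \<in> borel_measurable lborel"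
    "integrable (restrict_space lborel {0..1}) (\<lambda>t. (norm (G t))\<^sup>2)"
    "AE t in lborel. t \<in> {0<..<1} \<longrightarrow> ((\<lambda>t. h t * \<phi> (\<gamma> t)) has_real_derivative G t) (at t) \<and>
      (\<exists>hd \<gamma>d. (h has_real_derivative hd) (at t) \<and> (h t \<noteq> 0 \<longrightarrow> (\<gamma> has_vector_derivative \<gamma>d) (at t)) \<and>
        G t = (if h t = 0 then 0 else hd * \<phi> (\<gamma> t) + h t * (D\<phi> (\<gamma> t) \<bullet> \<gamma>d)))"
proof -
  obtain dh where AC_h: "AC_on 0 1 h" and dh: "dh \<in> borel_measurable lborel"
      "integrable (restrict_space lborel {0..1}) (\<lambda>t. (norm (dh t))\<^sup>2)"
      "AE t in lborel. t \<in> {0<..<1} \<longrightarrow> (h has_vector_derivative dh t) (at t)"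
    using AC2E[OF assms(1)] by blast
  obtain ds where ds: "ds \<in> borel_measurable lborel"
      "integrable (restrict_space lborel {0..1}) (\<lambda>t. (norm (ds t))\<^sup>2)"
      "AE t in lborel. t \<in> {0<..<1} \<longrightarrow> ((\<lambda>t. sqrt (h t)) has_vector_derivative ds t) (at t)"
    using AC2E[OF assms(2)] by blast
  obtain dw where AC_w: "AC_on 0 1 (\<lambda>t. sqrt (h t) *\<^sub>R \<gamma> t)" and dw: "dw \<in> borel_measurable lborel"
      "integrable (restrict_space lborel {0..1}) (\<lambda>t. (norm (dw t))\<^sup>2)"
      "AE t in lborel. t \<in> {0<..<1} \<longrightarrow> ((\<lambda>t. sqrt (h t) *\<^sub>R \<gamma> t) has_vector_derivative dw t) (at t)"
    using AC2E[OF assms(3)] by blast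
  have "continuous_on V \<phi>"
    using \<phi>' by (meson continuous_at_imp_continuous_on has_derivative_continuous)
  then have "bounded (\<phi> ` V)"
    using \<open>compact V\<close> by (intro compact_imp_bounded compact_continuous_image)
  then obtain B where B: "\<And>p. p \<in> V \<Longrightarrow> \<bar>\<phi> p\<bar> \<le> B"
    unfolding bounded_iff by (metis imageI real_norm_def)
  obtain G where G: "G \<in> borel_measurable lborel"
    "integrable (restrict_space lborel {0..1}) (\<lambda>t. (norm (G t))\<^sup>2)"
    "\<And>t. t \<in> {0<..<1} \<Longrightarrow> G t = (if h t = 0 then 0
       else dh t * \<phi> (\<gamma> t) + h t * (D\<phi> (\<gamma> t) \<bullet> ((dw t - ds t *\<^sub>R \<gamma> t) /\<^sub>R sqrt (h t))))"
    using square_integrable_mass_times_observable_derivative[where h = h and \<gamma> = \<gamma> and V = V,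
        OF h_nonneg \<gamma>_in \<open>compact V\<close>
        \<open>continuous_on V \<phi>\<close> \<open>continuous_on V D\<phi>\<close> AC_on_imp_continuous_on[OF AC_h]
        AC_on_imp_continuous_on[OF AC_w] dh(1) ds(1) dw(1) dh(2) ds(2) dw(2)] by blast
  have "AE t in lborel. t \<in> {0<..<1} \<longrightarrow> ((\<lambda>t. h t * \<phi> (\<gamma> t)) has_real_derivative G t) (at t) \<and>
      (\<exists>hd \<gamma>d. (h has_real_derivative hd) (at t) \<and> (h t \<noteq> 0 \<longrightarrow> (\<gamma> has_vector_derivative \<gamma>d) (at t)) \<and>
        G t = (if h t = 0 then 0 else hd * \<phi> (\<gamma> t) + h t * (D\<phi> (\<gamma> t) \<bullet> \<gamma>d)))"
    using dh(3) ds(3) dw(3)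
  proof eventually_elim
    case (elim t)
    show ?case
    proof
      assume t: "t \<in> {0<..<1}"
      with elim have h': "(h has_real_derivative dh t) (at t)"
        and "((\<lambda>t. sqrt (h t)) has_real_derivative ds t) (at t)"
        and "((\<lambda>t. sqrt (h t) *\<^sub>R \<gamma> t) has_vector_derivative dw t) (at t)"
        by (simp_all add: has_real_derivative_iff_has_vector_derivative)
      from has_derivative_mass_times_observable[where \<gamma> = \<gamma> and \<phi> = \<phi> and D\<phi> = D\<phi>,
          OF t h_nonneg \<gamma>_in B \<phi>' this] h'
      show "((\<lambda>t. h t * \<phi> (\<gamma> t)) has_real_derivative G t) (at t) \<and>
        (\<exists>hd \<gamma>d. (h has_real_derivative hd) (at t) \<and> (h t \<noteq> 0 \<longrightarrow> (\<gamma> has_vector_derivative \<gamma>d) (at t)) \<and>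
          G t = (if h t = 0 then 0 else hd * \<phi> (\<gamma> t) + h t * (D\<phi> (\<gamma> t) \<bullet> \<gamma>d)))"
        unfolding G(3)[OF t] by blast
    qed
  qed
  with G(1,2) show thesis
    by (rule that)
qed

lemma AC2_mass_times_observable:
  fixes h :: "real \<Rightarrow> real" and \<gamma> :: "real \<Rightarrow> 'a::euclidean_space" and \<phi> :: "'a \<Rightarrow> real"
  assumes AC2: "AC2 h" "AC2 (\<lambda>t. sqrt (h t))" "AC2 (\<lambda>t. sqrt (h t) *\<^sub>R \<gamma> t)"
    and h_nonneg: "\<And>t. t \<in> {0..1} \<Longrightarrow> 0 \<le> h t"
    and \<gamma>_in: "\<And>t. t \<in> {0..1} \<Longrightarrow> 0 < h t \<Longrightarrow> \<gamma> t \<in> V"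
    and "compact V" "V \<noteq> {}" "open W" "V \<subseteq> W"
    and \<phi>': "\<And>p. p \<in> W \<Longrightarrow> (\<phi> has_derivative (\<lambda>v. D\<phi> p \<bullet> v)) (at p)"
    and "continuous_on W D\<phi>"
  shows "AC2 (\<lambda>t. h t * \<phi> (\<gamma> t))
    \<and> (AE t in lborel. t \<in> {0<..<1} \<longrightarrow>
         (\<exists>hd \<gamma>d. (h has_real_derivative hd) (at t) \<and>
            (h t \<noteq> 0 \<longrightarrow> (\<gamma> has_vector_derivative \<gamma>d) (at t)) \<and>
            ((\<lambda>s. h s * \<phi> (\<gamma> s)) has_real_derivative
               (if h t = 0 then 0 else hd * \<phi> (\<gamma> t) + h t * (D\<phi> (\<gamma> t) \<bullet> \<gamma>d))) (at t)))"
proof -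
  obtain L where "L-lipschitz_on V \<phi>"
    using lipschitz_on_compact_if_continuous_derivative[OF \<open>compact V\<close> \<open>open W\<close> \<open>V \<subseteq> W\<close> \<phi>'
        \<open>continuous_on W D\<phi>\<close>] .
  moreover have "AC_on 0 1 h" "AC_on 0 1 (\<lambda>t. sqrt (h t))" "AC_on 0 1 (\<lambda>t. sqrt (h t) *\<^sub>R \<gamma> t)"
    using AC2 by (simp_all add: AC2_def)
  ultimately have AC: "AC_on 0 1 (\<lambda>t. h t * \<phi> (\<gamma> t))"
    using AC_on_mass_times_observable h_nonneg \<gamma>_in \<open>compact V\<close> \<open>V \<noteq> {}\<close> by blast
  have "\<And>p. p \<in> V \<Longrightarrow> (\<phi> has_derivative (\<lambda>v. D\<phi> p \<bullet> v)) (at p)"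
    using \<phi>' \<open>V \<subseteq> W\<close> by blast
  note derivative = AC2_derivative_mass_times_observable[where h = h and \<gamma> = \<gamma> and V = V and \<phi> = \<phi>,
      OF AC2 h_nonneg \<gamma>_in \<open>compact V\<close> continuous_on_subset[OF \<open>continuous_on W D\<phi>\<close> \<open>V \<subseteq> W\<close>] this]
  obtain G where G: "G \<in> borel_measurable lborel"
    "integrable (restrict_space lborel {0..1}) (\<lambda>t. (norm (G t))\<^sup>2)"
    "AE t in lborel. t \<in> {0<..<1} \<longrightarrow> ((\<lambda>t. h t * \<phi> (\<gamma> t)) has_real_derivative G t) (at t) \<and>
      (\<exists>hd \<gamma>d. (h has_real_derivative hd) (at t) \<and> (h t \<noteq> 0 \<longrightarrow> (\<gamma> has_vector_derivative \<gamma>d) (at t)) \<and>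
        G t = (if h t = 0 then 0 else hd * \<phi> (\<gamma> t) + h t * (D\<phi> (\<gamma> t) \<bullet> \<gamma>d)))"
    using derivative by blast
  have "AE t in lborel. t \<in> {0<..<1} \<longrightarrow> ((\<lambda>t. h t * \<phi> (\<gamma> t)) has_vector_derivative G t) (at t)"
    using G(3) by (rule eventually_mono) (simp add: has_real_derivative_iff_has_vector_derivative)
  moreover have "AE t in lborel. t \<in> {0<..<1} \<longrightarrow> (\<exists>hd \<gamma>d. (h has_real_derivative hd) (at t) \<and>
      (h t \<noteq> 0 \<longrightarrow> (\<gamma> has_vector_derivative \<gamma>d) (at t)) \<and>
      ((\<lambda>s. h s * \<phi> (\<gamma> s)) has_real_derivative
        (if h t = 0 then 0 else hd * \<phi> (\<gamma> t) + h t * (D\<phi> (\<gamma> t) \<bullet> \<gamma>d))) (at t))"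
    using G(3) by (rule eventually_mono) (auto split del: if_split; blast)
  ultimately show ?thesis
    unfolding AC2_def using AC G(1,2) by blast
qed

theorem lemma3p8:
  fixes U V :: "'a::euclidean_space set"
    and h :: "real \<Rightarrow> real" and \<gamma> :: "real \<Rightarrow> 'a"
    and b :: "'a \<Rightarrow> real" and Db :: "'a \<Rightarrow> 'a" and W :: "'a set"
  assumes "open U" "connected U" "bounded U" "U \<noteq> {}" "V = closure U"
    and "in_HV V h \<gamma>"
    and "open W" "V \<subseteq> W"
    and "\<And>x. x \<in> W \<Longrightarrow> (b has_derivative (\<lambda>v. Db x \<bullet> v)) (at x)"
    and "continuous_on W Db"
  shows "AC2 (\<lambda>t. if h t = 0 then 0 else h t * b (\<gamma> t))
    \<and> (AE t in lborel. t \<in> {0<..<1} \<longrightarrow>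
         (\<exists>hd \<gamma>d. (h has_real_derivative hd) (at t) \<and>
            (h t \<noteq> 0 \<longrightarrow> (\<gamma> has_vector_derivative \<gamma>d) (at t)) \<and>
            ((\<lambda>s. if h s = 0 then 0 else h s * b (\<gamma> s)) has_real_derivative
               (if h t = 0 then 0 else hd * b (\<gamma> t) + h t * (Db (\<gamma> t) \<bullet> \<gamma>d))) (at t)))"
proof -
  have F_eq: "(\<lambda>t. if h t = 0 then 0 else h t * b (\<gamma> t)) = (\<lambda>t. h t * b (\<gamma> t))"
    and w_eq: "(\<lambda>t. if h t = 0 then 0 else sqrt (h t) *\<^sub>R \<gamma> t) = (\<lambda>t. sqrt (h t) *\<^sub>R \<gamma> t)"
    by auto
  have h_nonneg: "\<And>t. t \<in> {0..1} \<Longrightarrow> 0 \<le> h t"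
    and \<gamma>_in: "\<And>t. t \<in> {0..1} \<Longrightarrow> 0 < h t \<Longrightarrow> \<gamma> t \<in> V"
    and AC2: "AC2 h" "AC2 (\<lambda>t. sqrt (h t))" "AC2 (\<lambda>t. sqrt (h t) *\<^sub>R \<gamma> t)"
    using \<open>in_HV V h \<gamma>\<close> unfolding in_HV_def in_SV_def w_eq by auto
  have "compact V" "V \<noteq> {}"
    using assms(3-5) closure_subset by (auto simp: compact_eq_bounded_closed bounded_closure)
  from AC2_mass_times_observable[OF AC2 h_nonneg \<gamma>_in this assms(7-10)]
  show ?thesis
    unfolding F_eq .
qed

end
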